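(* Let $T\in\mathcal C(\rho)$ and define $\psi\colon G\times Y\times Y\to\mathbb C$ by $\psi(u,v,y)=(TK_{0,y})(u,v)$. Then $\psi\in\mathcal A$ and $T=S_\psi$.
   Context: Let $G$ be a locally compact abelian group (written additively) with Haar measure $\nu$, and $(Y,\lambda)$ a measure space. Let $H$ be a reproducing kernel Hilbert space of complex functions on $G\times Y$ whose inner product is that of $L^2(G\times Y,\nu\otimes\lambda)$, with reproducing kernel $(K_{x,y})_{(x,y)\in G\times Y}$ (so $f(x,y)=\langle f,K_{x,y}\rangle$). Assume $K_{x,y}(u,v)=K_{0,y}(u-x,v)$ for all $u,x\in G$, $v,y\in Y$. For $a\in G$ let $(\rho(a)f)(x,y)=f(x-a,y)$ and $\mathcal C(\rho)=\{S\in\mathcal B(H): S\rho(a)=\rho(a)S\ \forall a\in G\}$. Let $\mathcal A_0$ be the set of functions $\psi\colon G\times Y\times Y\to\mathbb C$ such that $\psi(\cdot,\cdot,v)\in H$ for every $v\in Y$ and $(u,v)\mapsto\overline{\psi(-u,y,v)}$ belongs to $H$ for every $y\in Y$. For $\psi\in\mathcal A_0$, $f\in H$, define $(S_\psi f)(x,y)=\int_{G\times Y}f(u,v)\psi(x-u,y,v)\,d\nu(u)\,d\lambda(v)$. Let $\mathcal A$ be the set of $\psi\in\mathcal A_0$ such that $S_\psi f\in H$ for all $f\in H$ and $S_\psi$ is bounded on $H$. *)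

theory Defs
  imports "HOL-Analysis.Analysis"
begin

definition haar_measure :: "'g::{topological_ab_group_add,t2_space} measure \<Rightarrow> bool" where
  "haar_measure nu \<longleftrightarrow>
     sets nu = sets borel \<and>
     (\<forall>a A. A \<in> sets borel \<longrightarrow> emeasure nu ((\<lambda>x. a + x) ` A) = emeasure nu A) \<and>
     (\<forall>C. compact C \<longrightarrow> emeasure nu C < \<infinity>) \<and>
     (\<forall>A \<in> sets borel. emeasure nu A = (INF U \<in> {U. open U \<and> A \<subseteq> U}. emeasure nu U)) \<and>
     (\<forall>U. open U \<longrightarrow> emeasure nu U = (SUP C \<in> {C. compact C \<and> C \<subseteq> U}. emeasure nu C)) \<and>
     (\<exists>U. open U \<and> emeasure nu U \<noteq> 0)"

definition l2ip :: "'a measure \<Rightarrow> ('a \<Rightarrow> complex) \<Rightarrow> ('a \<Rightarrow> complex) \<Rightarrow> complex" where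
  "l2ip M f g = (LINT z|M. f z * cnj (g z))"

definition l2norm :: "'a measure \<Rightarrow> ('a \<Rightarrow> complex) \<Rightarrow> real" where
  "l2norm M f = sqrt (LINT z|M. (cmod (f z))\<^sup>2)"

definition rkhs_L2 :: "'a measure \<Rightarrow> ('a \<Rightarrow> complex) set \<Rightarrow> ('a \<Rightarrow> 'a \<Rightarrow> complex) \<Rightarrow> bool" where
  "rkhs_L2 M H K \<longleftrightarrow>
     (\<forall>f \<in> H. f \<in> borel_measurable M \<and> integrable M (\<lambda>z. (cmod (f z))\<^sup>2)) \<and>
     (\<lambda>z. 0) \<in> H \<and>
     (\<forall>f \<in> H. \<forall>g \<in> H. (\<lambda>z. f z + g z) \<in> H) \<and>
     (\<forall>c. \<forall>f \<in> H. (\<lambda>z. c * f z) \<in> H) \<and>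
     (\<forall>s. (\<forall>n. s n \<in> H) \<and>
          (\<forall>e>0. \<exists>N. \<forall>m\<ge>N. \<forall>n\<ge>N. l2norm M (\<lambda>z. s m z - s n z) < e)
          \<longrightarrow> (\<exists>f \<in> H. (\<lambda>n. l2norm M (\<lambda>z. s n z - f z)) \<longlonglongrightarrow> 0)) \<and>
     (\<forall>p. K p \<in> H) \<and>
     (\<forall>f \<in> H. \<forall>p. f p = l2ip M f (K p))"

definition bounded_op :: "'a measure \<Rightarrow> ('a \<Rightarrow> complex) set \<Rightarrow> (('a \<Rightarrow> complex) \<Rightarrow> ('a \<Rightarrow> complex)) \<Rightarrow> bool" where
  "bounded_op M H S \<longleftrightarrow>
     (\<forall>f \<in> H. S f \<in> H) \<and>
     (\<forall>f \<in> H. \<forall>g \<in> H. S (\<lambda>z. f z + g z) = (\<lambda>z. S f z + S g z)) \<and>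
     (\<forall>c. \<forall>f \<in> H. S (\<lambda>z. c * f z) = (\<lambda>z. c * S f z)) \<and>
     (\<exists>C. \<forall>f \<in> H. l2norm M (S f) \<le> C * l2norm M f)"

definition rho :: "'g::ab_group_add \<Rightarrow> ('g \<times> 'y \<Rightarrow> complex) \<Rightarrow> ('g \<times> 'y \<Rightarrow> complex)" where
  "rho a f = (\<lambda>(x, y). f (x - a, y))"

definition commutant_rho :: "('g::ab_group_add \<times> 'y) measure \<Rightarrow> ('g \<times> 'y \<Rightarrow> complex) set
    \<Rightarrow> (('g \<times> 'y \<Rightarrow> complex) \<Rightarrow> ('g \<times> 'y \<Rightarrow> complex)) set" where
  "commutant_rho M H = {S. bounded_op M H S \<and> (\<forall>a. \<forall>f \<in> H. S (rho a f) = rho a (S f))}"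

text \<open>The class A_0; psi u y v stands for psi(u,y,v).\<close>
definition A0 :: "('g::ab_group_add \<times> 'y \<Rightarrow> complex) set \<Rightarrow> ('g \<Rightarrow> 'y \<Rightarrow> 'y \<Rightarrow> complex) set" where
  "A0 H = {psi. (\<forall>v. (\<lambda>(u, w). psi u w v) \<in> H) \<and>
                (\<forall>y. (\<lambda>(u, v). cnj (psi (- u) y v)) \<in> H)}"

definition S_psi :: "('g::ab_group_add \<times> 'y) measure \<Rightarrow> ('g \<Rightarrow> 'y \<Rightarrow> 'y \<Rightarrow> complex)
    \<Rightarrow> ('g \<times> 'y \<Rightarrow> complex) \<Rightarrow> ('g \<times> 'y \<Rightarrow> complex)" where
  "S_psi M psi f = (\<lambda>(x, y). LINT z|M. f z * psi (x - fst z) y (snd z))"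

definition A_class :: "('g::ab_group_add \<times> 'y) measure \<Rightarrow> ('g \<times> 'y \<Rightarrow> complex) set
    \<Rightarrow> ('g \<Rightarrow> 'y \<Rightarrow> 'y \<Rightarrow> complex) set" where
  "A_class M H = {psi \<in> A0 H. bounded_op M H (S_psi M psi)}"

end

theory Submission
  imports Defs
begin

(* The value (T f)(x,y) = <T f, K(x,y)> depends boundedly and linearly on f, so by the Riesz
   representation theorem it equals <f, g> for some g in H, and the reproducing property gives
   g(u,v) = conj ((T K(u,v))(x,y)). Since K(u,v) is the translate rho(u) K(0,v) and T commutes
   with translations, (T K(u,v))(x,y) = (T K(0,v))(x-u,y) = psi(x-u,y,v), so T f = S_psi f; for
   x = 0 the same identity shows that u,v \<mapsto> conj psi(-u,y,v) is such a g, hence lies in H.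

   H is a set of functions rather than a Hilbert space type, so the Riesz theorem is proved for
   it directly: completeness and the parallelogram law yield an element of minimal norm on the
   level set where the functional equals 1, and minimality makes it orthogonal to the kernel. *)

definition square_integrable :: "'a measure \<Rightarrow> ('a \<Rightarrow> complex) \<Rightarrow> bool" where
  "square_integrable M f \<longleftrightarrow> f \<in> borel_measurable M \<and> integrable M (\<lambda>z. (cmod (f z))\<^sup>2)"

lemma l2norm_nonneg: "0 \<le> l2norm M f"
  by (simp add: l2norm_def)

lemma l2norm_power2: "(l2norm M f)\<^sup>2 = (LINT z|M. (cmod (f z))\<^sup>2)"
  unfolding l2norm_def by (simp add: integral_nonneg_AE)

lemma l2norm_minus_commute: "l2norm M (\<lambda>z. f z - g z) = l2norm M (\<lambda>z. g z - f z)"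
  unfolding l2norm_def by (simp add: norm_minus_commute)

lemma l2norm_mult_left: "l2norm M (\<lambda>z. c * f z) = cmod c * l2norm M f"
  unfolding l2norm_def by (simp add: norm_mult power_mult_distrib real_sqrt_mult)

lemma l2ip_self: "l2ip M f f = of_real ((l2norm M f)\<^sup>2)"
proof -
  have "(\<lambda>z. f z * cnj (f z)) = (\<lambda>z. complex_of_real ((cmod (f z))\<^sup>2))"
    by (simp add: fun_eq_iff complex_norm_square[symmetric] del: of_real_power)
  then show ?thesis
    unfolding l2ip_def l2norm_power2 by (simp del: of_real_power add: integral_complex_of_real)
qed

lemma l2ip_cnj_commute: "l2ip M g f = cnj (l2ip M f g)"
proof -
  have "l2ip M g f = (CLINT z|M. cnj (f z * cnj (g z)))"
    unfolding l2ip_def by (simp add: mult.commute)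
  then show ?thesis
    unfolding l2ip_def by (simp only: Bochner_Integration.integral_cnj)
qed

lemma l2ip_mult_left: "l2ip M (\<lambda>z. c * f z) g = c * l2ip M f g"
  unfolding l2ip_def by (simp add: mult.assoc)

lemma l2ip_mult_right: "l2ip M f (\<lambda>z. c * g z) = cnj c * l2ip M f g"
  unfolding l2ip_def by (simp add: mult.left_commute)

lemma square_integrable_mult_left:
  "square_integrable M f \<Longrightarrow> square_integrable M (\<lambda>z. c * f z)"
  unfolding square_integrable_def by (auto simp: norm_mult power_mult_distrib)

lemma integrable_mult_cnj:
  assumes "square_integrable M f" "square_integrable M g"
  shows "integrable M (\<lambda>z. f z * cnj (g z))"
proof (rule Bochner_Integration.integrable_bound)
  show "integrable M (\<lambda>z. (cmod (f z))\<^sup>2 + (cmod (g z))\<^sup>2)"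
    using assms unfolding square_integrable_def by auto
  have "f \<in> borel_measurable M" "g \<in> borel_measurable M"
    using assms unfolding square_integrable_def by auto
  moreover have "(\<lambda>z. cnj (g z)) \<in> borel_measurable M"
    using calculation(2) borel_measurable_continuous_on[OF continuous_on_cnj[OF continuous_on_id]]
    by auto
  ultimately show "(\<lambda>z. f z * cnj (g z)) \<in> borel_measurable M"
    by measurable
  have "cmod a * cmod b \<le> (cmod a)\<^sup>2 + (cmod b)\<^sup>2" for a b :: complex
    using sum_squares_bound[of "cmod a" "cmod b"]
      mult_nonneg_nonneg[OF norm_ge_zero norm_ge_zero, of a b]
    by linarith
  then show "AE z in M. norm (f z * cnj (g z)) \<le> norm ((cmod (f z))\<^sup>2 + (cmod (g z))\<^sup>2)"
    by (simp add: norm_mult)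
qed

lemma l2ip_diff_left:
  assumes "square_integrable M f" "square_integrable M g" "square_integrable M h"
  shows "l2ip M (\<lambda>z. f z - g z) h = l2ip M f h - l2ip M g h"
  unfolding l2ip_def using assms by (simp add: left_diff_distrib integrable_mult_cnj)

lemma l2norm_add_power2:
  assumes "square_integrable M f" "square_integrable M g"
  shows "(l2norm M (\<lambda>z. f z + g z))\<^sup>2 = (l2norm M f)\<^sup>2 + (l2norm M g)\<^sup>2 + 2 * Re (l2ip M f g)"
proof -
  have f2: "integrable M (\<lambda>z. (cmod (f z))\<^sup>2)" and g2: "integrable M (\<lambda>z. (cmod (g z))\<^sup>2)"
    using assms unfolding square_integrable_def by auto
  have fg: "integrable M (\<lambda>z. Re (f z * cnj (g z)))"
    by (rule integrable_Re[OF integrable_mult_cnj[OF assms]])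
  have expand: "(cmod (a + b))\<^sup>2 = (cmod a)\<^sup>2 + (cmod b)\<^sup>2 + 2 * Re (a * cnj b)" for a b :: complex
    unfolding cmod_power2 by (simp add: power2_eq_square algebra_simps)
  have "(l2norm M (\<lambda>z. f z + g z))\<^sup>2
      = (LINT z|M. ((cmod (f z))\<^sup>2 + (cmod (g z))\<^sup>2) + 2 * Re (f z * cnj (g z)))"
    unfolding l2norm_power2 by (simp only: expand)
  also have "\<dots> = (LINT z|M. (cmod (f z))\<^sup>2 + (cmod (g z))\<^sup>2) + (LINT z|M. 2 * Re (f z * cnj (g z)))"
    by (intro Bochner_Integration.integral_add Bochner_Integration.integrable_add
        Bochner_Integration.integrable_mult_right f2 g2 fg)
  also have "\<dots> = (l2norm M f)\<^sup>2 + (l2norm M g)\<^sup>2 + 2 * (LINT z|M. Re (f z * cnj (g z)))"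
    unfolding l2norm_power2 using f2 g2
    by (simp only: Bochner_Integration.integral_add integral_mult_right_zero)
  also have "(LINT z|M. Re (f z * cnj (g z))) = Re (l2ip M f g)"
    unfolding l2ip_def by (rule integral_Re) (rule integrable_mult_cnj[OF assms])
  finally show ?thesis .
qed

lemma l2norm_parallelogram:
  assumes "square_integrable M f" "square_integrable M g"
  shows "(l2norm M (\<lambda>z. f z + g z))\<^sup>2 + (l2norm M (\<lambda>z. f z - g z))\<^sup>2
    = 2 * (l2norm M f)\<^sup>2 + 2 * (l2norm M g)\<^sup>2"
proof -
  have "(l2norm M (\<lambda>z. f z - g z))\<^sup>2 = (l2norm M (\<lambda>z. f z + (- 1) * g z))\<^sup>2"
    by simp
  also have "\<dots> = (l2norm M f)\<^sup>2 + (l2norm M g)\<^sup>2 - 2 * Re (l2ip M f g)"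
    using l2norm_add_power2[OF assms(1) square_integrable_mult_left[where c="- 1", OF assms(2)]]
      l2norm_mult_left[of M "- 1" g] l2ip_mult_right[of M f "- 1" g]
    by simp
  finally show ?thesis
    using l2norm_add_power2[OF assms] by simp
qed

lemma l2ip_Cauchy_Schwarz:
  assumes "square_integrable M f" "square_integrable M g"
  shows "cmod (l2ip M f g) \<le> l2norm M f * l2norm M g"
proof -
  have f: "f \<in> borel_measurable M" "integrable M (\<lambda>z. (cmod (f z))\<^sup>2)"
    and g: "g \<in> borel_measurable M" "integrable M (\<lambda>z. (cmod (g z))\<^sup>2)"
    using assms unfolding square_integrable_def by auto
  have fg: "integrable M (\<lambda>z. cmod (f z) * cmod (g z))"
    using integrable_norm[OF integrable_mult_cnj[OF assms]] by (simp add: norm_mult)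
  define I where "I = (LINT z|M. cmod (f z) * cmod (g z))"
  have I_nonneg: "0 \<le> I"
    unfolding I_def by (simp add: integral_nonneg_AE)
  have "(\<integral>\<^sup>+z. ennreal (cmod (f z)) * ennreal (cmod (g z)) \<partial>M)\<^sup>2
      \<le> (\<integral>\<^sup>+z. ennreal (cmod (f z)) ^ 2 \<partial>M) * (\<integral>\<^sup>+z. ennreal (cmod (g z)) ^ 2 \<partial>M)"
    using f(1) g(1) by (intro Cauchy_Schwarz_nn_integral) auto
  also have "(\<integral>\<^sup>+z. ennreal (cmod (f z)) * ennreal (cmod (g z)) \<partial>M) = ennreal I"
    unfolding I_def using nn_integral_eq_integral[OF fg] by (simp add: ennreal_mult)
  also have "(\<integral>\<^sup>+z. ennreal (cmod (f z)) ^ 2 \<partial>M) = ennreal ((l2norm M f)\<^sup>2)"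
    unfolding l2norm_power2 using f(2) by (simp add: nn_integral_eq_integral ennreal_power)
  also have "(\<integral>\<^sup>+z. ennreal (cmod (g z)) ^ 2 \<partial>M) = ennreal ((l2norm M g)\<^sup>2)"
    unfolding l2norm_power2 using g(2) by (simp add: nn_integral_eq_integral ennreal_power)
  finally have "I\<^sup>2 \<le> (l2norm M f * l2norm M g)\<^sup>2"
    using I_nonneg by (simp add: ennreal_power power_mult_distrib flip: ennreal_mult)
  then have "I \<le> l2norm M f * l2norm M g"
    by (rule power2_le_imp_le) (simp add: l2norm_nonneg)
  moreover have "cmod (l2ip M f g) \<le> I"
    unfolding l2ip_def I_def using integral_norm_bound[of M "\<lambda>z. f z * cnj (g z)"]
    by (simp add: norm_mult)
  ultimately show ?thesis
    by linarith
qed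

lemma l2norm_triangle:
  assumes "square_integrable M f" "square_integrable M g"
  shows "l2norm M (\<lambda>z. f z + g z) \<le> l2norm M f + l2norm M g"
proof (rule power2_le_imp_le)
  show "(l2norm M (\<lambda>z. f z + g z))\<^sup>2 \<le> (l2norm M f + l2norm M g)\<^sup>2"
    using l2norm_add_power2[OF assms] l2ip_Cauchy_Schwarz[OF assms]
      complex_Re_le_cmod[of "l2ip M f g"]
    by (simp add: power2_sum)
qed (simp add: l2norm_nonneg)

lemma l2ip_eq_0_if_l2norm_minimal:
  assumes h: "square_integrable M h" and k: "square_integrable M k"
    and minimal: "\<And>t. l2norm M h \<le> l2norm M (\<lambda>z. h z + t * k z)"
  shows "l2ip M h k = 0"
proof -
  define a where "a = l2ip M h k"
  define \<epsilon> where "\<epsilon> = 1 / ((l2norm M k)\<^sup>2 + 1)"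
  have "0 < (l2norm M k)\<^sup>2 + 1"
    by (simp add: add_nonneg_pos)
  then have \<epsilon>: "0 < \<epsilon>" "\<epsilon> * (l2norm M k)\<^sup>2 < 1"
    unfolding \<epsilon>_def by (simp_all add: field_simps)
  (* for small \<epsilon> the first-order term -2 \<epsilon> |a|^2 of the expansion dominates *)
  define t where "t = - of_real \<epsilon> * a"
  have "(l2norm M h)\<^sup>2 \<le> (l2norm M (\<lambda>z. h z + t * k z))\<^sup>2"
    using minimal[of t] by (simp add: l2norm_nonneg power_mono)
  also have "\<dots> = (l2norm M h)\<^sup>2 + (cmod t * l2norm M k)\<^sup>2 + 2 * Re (cnj t * a)"
    using l2norm_add_power2[OF h square_integrable_mult_left[OF k]]
    by (simp add: l2norm_mult_left l2ip_mult_right a_def)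
  also have "(cmod t * l2norm M k)\<^sup>2 = \<epsilon>\<^sup>2 * (cmod a)\<^sup>2 * (l2norm M k)\<^sup>2"
    unfolding t_def using \<epsilon>(1) by (simp add: norm_mult power_mult_distrib)
  also have "Re (cnj t * a) = - \<epsilon> * (cmod a)\<^sup>2"
    unfolding t_def cmod_power2 by (simp add: power2_eq_square algebra_simps)
  finally have "0 \<le> \<epsilon> * (cmod a)\<^sup>2 * (\<epsilon> * (l2norm M k)\<^sup>2 - 2)"
    by (simp add: power2_eq_square algebra_simps)
  then have "\<epsilon> * (cmod a)\<^sup>2 \<le> 0"
    using \<epsilon> by (simp add: zero_le_mult_iff)
  then have "(cmod a)\<^sup>2 \<le> 0"
    using \<epsilon>(1) by (simp add: mult_le_0_iff)
  then show ?thesis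
    unfolding a_def by simp
qed

definition bounded_functional ::
    "'a measure \<Rightarrow> ('a \<Rightarrow> complex) set \<Rightarrow> (('a \<Rightarrow> complex) \<Rightarrow> complex) \<Rightarrow> bool" where
  "bounded_functional M H \<phi> \<longleftrightarrow>
     (\<forall>f\<in>H. \<forall>g\<in>H. \<phi> (\<lambda>z. f z + g z) = \<phi> f + \<phi> g) \<and>
     (\<forall>c. \<forall>f\<in>H. \<phi> (\<lambda>z. c * f z) = c * \<phi> f) \<and>
     (\<exists>C. \<forall>f\<in>H. cmod (\<phi> f) \<le> C * l2norm M f)"

locale l2_subspace =
  fixes M :: "'a measure" and H :: "('a \<Rightarrow> complex) set"
  assumes square_integrable: "f \<in> H \<Longrightarrow> square_integrable M f"
    and zero_mem: "(\<lambda>z. 0) \<in> H"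
    and add_mem: "f \<in> H \<Longrightarrow> g \<in> H \<Longrightarrow> (\<lambda>z. f z + g z) \<in> H"
    and mult_mem: "f \<in> H \<Longrightarrow> (\<lambda>z. c * f z) \<in> H"
    and complete: "(\<And>n. s n \<in> H) \<Longrightarrow>
      (\<And>e. 0 < e \<Longrightarrow> \<exists>N. \<forall>m\<ge>N. \<forall>n\<ge>N. l2norm M (\<lambda>z. s m z - s n z) < e) \<Longrightarrow>
      \<exists>f\<in>H. (\<lambda>n. l2norm M (\<lambda>z. s n z - f z)) \<longlonglongrightarrow> 0"
begin

lemma diff_mem: "f \<in> H \<Longrightarrow> g \<in> H \<Longrightarrow> (\<lambda>z. f z - g z) \<in> H"
  using add_mem[OF _ mult_mem, of f g "- 1"] by simp

lemma minimizing_sequence_Cauchy: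
  assumes s: "\<And>n. s n \<in> H"
    and lower: "\<And>m n. d \<le> (l2norm M (\<lambda>z. (s m z + s n z) / 2))\<^sup>2"
    and minimizing: "\<And>n. (l2norm M (s n))\<^sup>2 < d + 1 / Suc n"
    and "0 < e"
  shows "\<exists>N. \<forall>m\<ge>N. \<forall>n\<ge>N. l2norm M (\<lambda>z. s m z - s n z) < e"
proof -
  have diff_bound: "(l2norm M (\<lambda>z. s m z - s n z))\<^sup>2 \<le> 2 / Suc m + 2 / Suc n" for m n
  proof -
    have "(\<lambda>z. s m z + s n z) = (\<lambda>z. 2 * ((s m z + s n z) / 2))"
      by (simp add: fun_eq_iff)
    then have "l2norm M (\<lambda>z. s m z + s n z) = l2norm M (\<lambda>z. 2 * ((s m z + s n z) / 2))"
      by (rule arg_cong)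
    also have "\<dots> = 2 * l2norm M (\<lambda>z. (s m z + s n z) / 2)"
      by (simp only: l2norm_mult_left) simp
    finally show ?thesis
      using l2norm_parallelogram[OF square_integrable[OF s] square_integrable[OF s], of m n]
        lower[of m n] minimizing[of m] minimizing[of n]
      by (simp add: power_mult_distrib)
  qed
  obtain N :: nat where N: "4 / e\<^sup>2 < Suc N"
    using reals_Archimedean2 less_Suc_eq of_nat_less_iff by (metis less_trans)
  have "l2norm M (\<lambda>z. s m z - s n z) < e" if "N \<le> m" "N \<le> n" for m n
  proof (rule power2_less_imp_less)
    have "2 / real (Suc m) \<le> 2 / Suc N" "2 / real (Suc n) \<le> 2 / Suc N"
      using that by (simp_all add: frac_le)
    then have "2 / real (Suc m) + 2 / real (Suc n) \<le> 4 / Suc N"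
      by simp
    also have "\<dots> < e\<^sup>2"
      using N \<open>0 < e\<close> by (simp add: field_simps)
    finally show "(l2norm M (\<lambda>z. s m z - s n z))\<^sup>2 < e\<^sup>2"
      using diff_bound[of m n] by linarith
  qed (use \<open>0 < e\<close> in simp)
  then show ?thesis
    by blast
qed

lemma exists_min_l2norm:
  assumes "A \<subseteq> H" "A \<noteq> {}"
    and midpoint: "\<And>f g. f \<in> A \<Longrightarrow> g \<in> A \<Longrightarrow> (\<lambda>z. (f z + g z) / 2) \<in> A"
    and closed: "\<And>s f. (\<And>n. s n \<in> A) \<Longrightarrow> f \<in> H \<Longrightarrow>
      (\<lambda>n. l2norm M (\<lambda>z. s n z - f z)) \<longlonglongrightarrow> 0 \<Longrightarrow> f \<in> A"
  obtains h where "h \<in> A" "\<And>f. f \<in> A \<Longrightarrow> l2norm M h \<le> l2norm M f"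
proof -
  define d where "d = (INF f\<in>A. (l2norm M f)\<^sup>2)"
  have d_le: "d \<le> (l2norm M f)\<^sup>2" if "f \<in> A" for f
    unfolding d_def using that by (intro cInf_lower bdd_belowI2[of _ 0]) auto
  have "\<exists>f\<in>A. (l2norm M f)\<^sup>2 < d + 1 / Suc n" for n
    using cInf_lessD[of "(\<lambda>f. (l2norm M f)\<^sup>2) ` A" "d + 1 / Suc n"] \<open>A \<noteq> {}\<close>
    unfolding d_def by auto
  then obtain s where s: "\<And>n. s n \<in> A" "\<And>n. (l2norm M (s n))\<^sup>2 < d + 1 / Suc n"
    by metis
  have sH: "s n \<in> H" for n
    using s(1) \<open>A \<subseteq> H\<close> by auto
  obtain h where h: "h \<in> H" "(\<lambda>n. l2norm M (\<lambda>z. s n z - h z)) \<longlonglongrightarrow> 0"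
    using complete[OF sH minimizing_sequence_Cauchy[OF sH d_le[OF midpoint[OF s(1) s(1)]] s(2)]]
    by blast
  have "l2norm M h \<le> sqrt (d + 1 / Suc n) + l2norm M (\<lambda>z. s n z - h z)" for n
  proof -
    have "l2norm M h \<le> l2norm M (s n) + l2norm M (\<lambda>z. h z - s n z)"
      using l2norm_triangle[OF square_integrable[OF sH[of n]]
          square_integrable[OF diff_mem[OF h(1) sH[of n]]]]
      by simp
    moreover have "l2norm M (s n) \<le> sqrt (d + 1 / Suc n)"
      using s(2)[of n] real_le_rsqrt by fastforce
    ultimately show ?thesis
      using l2norm_minus_commute[of M h "s n"] by linarith
  qed
  moreover have "(\<lambda>n. sqrt (d + 1 / Suc n) + l2norm M (\<lambda>z. s n z - h z)) \<longlonglongrightarrow> sqrt (d + 0) + 0"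
    by (intro tendsto_intros h(2) LIMSEQ_Suc[OF lim_const_over_n])
  ultimately have "l2norm M h \<le> sqrt d"
    by (intro LIMSEQ_le_const[of _ "sqrt d"]) auto
  moreover have "sqrt d \<le> l2norm M f" if "f \<in> A" for f
    using real_sqrt_le_mono[OF d_le[OF that]] by (simp add: l2norm_nonneg)
  ultimately have "l2norm M h \<le> l2norm M f" if "f \<in> A" for f
    using that by force
  then show ?thesis
    using that closed[OF s(1) h] by blast
qed

lemma bounded_functional_diff:
  assumes "bounded_functional M H \<phi>" "f \<in> H" "g \<in> H"
  shows "\<phi> (\<lambda>z. f z - g z) = \<phi> f - \<phi> g"
proof -
  have add: "\<phi> (\<lambda>z. f z + c * g z) = \<phi> f + \<phi> (\<lambda>z. c * g z)"
    and mult: "\<phi> (\<lambda>z. c * g z) = c * \<phi> g" for c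
    using assms mult_mem[OF assms(3)] unfolding bounded_functional_def by auto
  show ?thesis
    using add[of "- 1"] mult[of "- 1"] by simp
qed

lemma exists_min_l2norm_level_set:
  assumes \<phi>: "bounded_functional M H \<phi>" and h1: "h1 \<in> H" "\<phi> h1 = 1"
  obtains h where "h \<in> H" "\<phi> h = 1" "\<And>f. f \<in> H \<Longrightarrow> \<phi> f = 1 \<Longrightarrow> l2norm M h \<le> l2norm M f"
proof -
  have add: "\<And>f g. f \<in> H \<Longrightarrow> g \<in> H \<Longrightarrow> \<phi> (\<lambda>z. f z + g z) = \<phi> f + \<phi> g"
    and mult: "\<And>c f. f \<in> H \<Longrightarrow> \<phi> (\<lambda>z. c * f z) = c * \<phi> f"
    using \<phi> unfolding bounded_functional_def by auto
  obtain C where bounded: "\<And>f. f \<in> H \<Longrightarrow> cmod (\<phi> f) \<le> C * l2norm M f"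
    using \<phi> unfolding bounded_functional_def by blast
  define A where "A = {f\<in>H. \<phi> f = 1}"
  obtain h where "h \<in> A" "\<And>f. f \<in> A \<Longrightarrow> l2norm M h \<le> l2norm M f"
  proof (rule exists_min_l2norm)
    show "A \<subseteq> H" "A \<noteq> {}"
      using h1 unfolding A_def by auto
  next
    fix f g assume "f \<in> A" "g \<in> A"
    then have fg: "f \<in> H" "g \<in> H" "\<phi> f = 1" "\<phi> g = 1"
      unfolding A_def by auto
    have "(\<lambda>z. (f z + g z) / 2) = (\<lambda>z. (1 / 2) * (f z + g z))"
      by (simp add: fun_eq_iff)
    moreover have "\<phi> (\<lambda>z. (1 / 2) * (f z + g z)) = 1"
      using mult[OF add_mem[OF fg(1,2)], of "1 / 2"] add[OF fg(1,2)] fg(3,4) by simp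
    ultimately show "(\<lambda>z. (f z + g z) / 2) \<in> A"
      unfolding A_def using mult_mem[OF add_mem[OF fg(1,2)], of "1 / 2"] by simp
  next
    fix s f assume s: "\<And>n. s n \<in> A" and f: "f \<in> H"
      and lim: "(\<lambda>n. l2norm M (\<lambda>z. s n z - f z)) \<longlonglongrightarrow> 0"
    have "cmod (1 - \<phi> f) \<le> C * l2norm M (\<lambda>z. s n z - f z)" for n
    proof -
      have "s n \<in> H" "\<phi> (s n) = 1"
        using s[of n] unfolding A_def by auto
      then show ?thesis
        using bounded[OF diff_mem] bounded_functional_diff[OF \<phi>] f by metis
    qed
    then have "cmod (1 - \<phi> f) \<le> 0"
      using tendsto_mult_right_zero[OF lim, of C] by (intro LIMSEQ_le_const) auto
    then show "f \<in> A"
      unfolding A_def using f by simp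
  qed blast
  then show ?thesis
    using that unfolding A_def by blast
qed

lemma min_l2norm_level_set_orthogonal:
  assumes \<phi>: "bounded_functional M H \<phi>" and h: "h \<in> H" "\<phi> h = 1"
    and h_min: "\<And>f. f \<in> H \<Longrightarrow> \<phi> f = 1 \<Longrightarrow> l2norm M h \<le> l2norm M f"
    and k: "k \<in> H" "\<phi> k = 0"
  shows "l2ip M h k = 0"
proof (rule l2ip_eq_0_if_l2norm_minimal[OF square_integrable[OF h(1)] square_integrable[OF k(1)]])
  fix t
  have "\<phi> (\<lambda>z. h z + t * k z) = 1"
    using \<phi> h mult_mem[OF k(1)] k unfolding bounded_functional_def by simp
  then show "l2norm M h \<le> l2norm M (\<lambda>z. h z + t * k z)"
    using add_mem[OF h(1) mult_mem[OF k(1)]] by (rule h_min[rotated])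
qed

lemma Riesz_representation:
  assumes \<phi>: "bounded_functional M H \<phi>"
  obtains g where "g \<in> H" "\<And>f. f \<in> H \<Longrightarrow> \<phi> f = l2ip M f g"
proof (cases "\<forall>f\<in>H. \<phi> f = 0")
  case True
  then show ?thesis
    using that[OF zero_mem] by (simp add: l2ip_def)
next
  case False
  have mult: "\<And>c f. f \<in> H \<Longrightarrow> \<phi> (\<lambda>z. c * f z) = c * \<phi> f"
    using \<phi> unfolding bounded_functional_def by auto
  obtain C where bounded: "\<And>f. f \<in> H \<Longrightarrow> cmod (\<phi> f) \<le> C * l2norm M f"
    using \<phi> unfolding bounded_functional_def by blast
  from False obtain f0 where f0: "f0 \<in> H" "\<phi> f0 \<noteq> 0"
    by blast
  have "(\<lambda>z. (1 / \<phi> f0) * f0 z) \<in> H" "\<phi> (\<lambda>z. (1 / \<phi> f0) * f0 z) = 1"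
    using mult_mem[OF f0(1), of "1 / \<phi> f0"] mult[OF f0(1), of "1 / \<phi> f0"] f0(2) by simp_all
  then obtain h where hH: "h \<in> H" and h_one: "\<phi> h = 1"
    and h_min: "\<And>f. f \<in> H \<Longrightarrow> \<phi> f = 1 \<Longrightarrow> l2norm M h \<le> l2norm M f"
    by (rule exists_min_l2norm_level_set[OF \<phi>]) blast
  have h_pos: "0 < l2norm M h"
    using bounded[OF hH] h_one l2norm_nonneg[of M h] by (cases "l2norm M h = 0") auto
  show ?thesis
  proof (rule that)
    show "(\<lambda>z. of_real (1 / (l2norm M h)\<^sup>2) * h z) \<in> H"
      using hH mult_mem by blast
  next
    fix f assume f: "f \<in> H"
    have "l2ip M h (\<lambda>z. f z - \<phi> f * h z) = 0"
      using f hH h_one bounded_functional_diff[OF \<phi>] mult mult_mem diff_mem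
      by (intro min_l2norm_level_set_orthogonal[OF \<phi> hH h_one h_min]) auto
    then have "l2ip M (\<lambda>z. f z - \<phi> f * h z) h = 0"
      by (simp add: l2ip_cnj_commute[of M _ h])
    then have "l2ip M f h = \<phi> f * (l2norm M h)\<^sup>2"
      using l2ip_diff_left[OF square_integrable[OF f] square_integrable[OF mult_mem[OF hH]]
          square_integrable[OF hH]]
      by (simp add: l2ip_mult_left l2ip_self)
    then show "\<phi> f = l2ip M f (\<lambda>z. of_real (1 / (l2norm M h)\<^sup>2) * h z)"
      using h_pos l2ip_mult_right[of M f "of_real (1 / (l2norm M h)\<^sup>2)" h] by simp
  qed
qed

lemma bounded_op_cong:
  assumes "bounded_op M H T" "\<And>f. f \<in> H \<Longrightarrow> S f = T f"
  shows "bounded_op M H S"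
  using assms add_mem mult_mem unfolding bounded_op_def by auto

end

lemma rkhs_L2_imp_l2_subspace: "rkhs_L2 M H K \<Longrightarrow> l2_subspace M H"
  unfolding rkhs_L2_def l2_subspace_def square_integrable_def by blast

lemma bounded_functional_bounded_op_eval:
  assumes rkhs: "rkhs_L2 M H K" and T: "bounded_op M H T"
  shows "bounded_functional M H (\<lambda>f. T f p)"
proof -
  interpret l2_subspace M H
    using rkhs by (rule rkhs_L2_imp_l2_subspace)
  have K: "K p \<in> H" and reproducing: "\<And>f. f \<in> H \<Longrightarrow> f p = l2ip M f (K p)"
    using rkhs unfolding rkhs_L2_def by auto
  have TH: "\<And>f. f \<in> H \<Longrightarrow> T f \<in> H"
    and T_add: "\<And>f g. f \<in> H \<Longrightarrow> g \<in> H \<Longrightarrow> T (\<lambda>z. f z + g z) = (\<lambda>z. T f z + T g z)"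
    and T_mult: "\<And>c f. f \<in> H \<Longrightarrow> T (\<lambda>z. c * f z) = (\<lambda>z. c * T f z)"
    using T unfolding bounded_op_def by auto
  obtain C where T_bounded: "\<And>f. f \<in> H \<Longrightarrow> l2norm M (T f) \<le> C * l2norm M f"
    using T unfolding bounded_op_def by blast
  have "cmod (T f p) \<le> C * l2norm M (K p) * l2norm M f" if f: "f \<in> H" for f
  proof -
    have "cmod (T f p) = cmod (l2ip M (T f) (K p))"
      using reproducing[OF TH[OF f]] by simp
    also have "\<dots> \<le> l2norm M (T f) * l2norm M (K p)"
      using l2ip_Cauchy_Schwarz square_integrable TH f K by blast
    also have "\<dots> \<le> C * l2norm M f * l2norm M (K p)"
      using T_bounded[OF f] by (simp add: mult_right_mono l2norm_nonneg)
    finally show ?thesis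
      by (simp add: ac_simps)
  qed
  then show ?thesis
    unfolding bounded_functional_def using T_add T_mult by (intro conjI ballI allI exI) auto
qed

lemma rkhs_L2_bounded_op_eq_l2ip:
  assumes rkhs: "rkhs_L2 M H K" and T: "bounded_op M H T"
  shows "(\<lambda>z. cnj (T (K z) p)) \<in> H"
    and "f \<in> H \<Longrightarrow> T f p = l2ip M f (\<lambda>z. cnj (T (K z) p))"
proof -
  interpret l2_subspace M H
    using rkhs by (rule rkhs_L2_imp_l2_subspace)
  have K: "K q \<in> H" and reproducing: "\<And>f. f \<in> H \<Longrightarrow> f q = l2ip M f (K q)" for q
    using rkhs unfolding rkhs_L2_def by auto
  have "bounded_functional M H (\<lambda>f. T f p)"
    using rkhs T by (rule bounded_functional_bounded_op_eval)
  then obtain g where g: "g \<in> H" "\<And>f. f \<in> H \<Longrightarrow> T f p = l2ip M f g"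
    by (rule Riesz_representation) blast
  have "g = (\<lambda>z. cnj (T (K z) p))"
  proof
    fix z
    have "g z = l2ip M g (K z)"
      by (rule reproducing[OF g(1)])
    also have "\<dots> = cnj (T (K z) p)"
      using g(2)[OF K] l2ip_cnj_commute[of M g "K z"] by simp
    finally show "g z = cnj (T (K z) p)" .
  qed
  then show "(\<lambda>z. cnj (T (K z) p)) \<in> H"
    and "f \<in> H \<Longrightarrow> T f p = l2ip M f (\<lambda>z. cnj (T (K z) p))"
    using g by auto
qed

lemma commutant_rho_kernel_translate:
  assumes rkhs: "rkhs_L2 M H K"
    and K_translate: "\<And>u x v y. K (x, y) (u, v) = K (0, y) (u - x, v)"
    and T: "T \<in> commutant_rho M H"
  shows "T (K (u, v)) (x, y) = T (K (0, v)) (x - u, y)"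
proof -
  have "K (u, v) = rho u (K (0, v))"
    using K_translate by (auto simp: rho_def)
  moreover have "K (0, v) \<in> H"
    using rkhs unfolding rkhs_L2_def by blast
  ultimately have "T (K (u, v)) = rho u (T (K (0, v)))"
    using T unfolding commutant_rho_def by auto
  then show ?thesis
    by (simp add: rho_def)
qed

lemma commutant_rho_eq_S_psi:
  assumes rkhs: "rkhs_L2 M H K"
    and K_translate: "\<And>u x v y. K (x, y) (u, v) = K (0, y) (u - x, v)"
    and T: "T \<in> commutant_rho M H" and f: "f \<in> H"
  shows "T f = S_psi M (\<lambda>u v y. T (K (0, y)) (u, v)) f"
proof
  fix q
  have "bounded_op M H T"
    using T unfolding commutant_rho_def by simp
  then show "T f q = S_psi M (\<lambda>u v y. T (K (0, y)) (u, v)) f q"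
    using rkhs_L2_bounded_op_eq_l2ip(2)[OF rkhs _ f, of T q]
      commutant_rho_kernel_translate[OF rkhs K_translate T]
    by (cases q) (simp add: S_psi_def l2ip_def split_beta)
qed

lemma commutant_rho_kernel_in_A0:
  assumes rkhs: "rkhs_L2 M H K"
    and K_translate: "\<And>u x v y. K (x, y) (u, v) = K (0, y) (u - x, v)"
    and T: "T \<in> commutant_rho M H"
  shows "(\<lambda>u v y. T (K (0, y)) (u, v)) \<in> A0 H"
  unfolding A0_def
proof (intro CollectI conjI allI)
  have T_bounded: "bounded_op M H T"
    using T unfolding commutant_rho_def by simp
  fix v y
  have "(\<lambda>(u, w). T (K (0, v)) (u, w)) = T (K (0, v))"
    by (simp add: fun_eq_iff)
  moreover have "K (0, v) \<in> H"
    using rkhs unfolding rkhs_L2_def by blast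
  ultimately show "(\<lambda>(u, w). T (K (0, v)) (u, w)) \<in> H"
    using T_bounded unfolding bounded_op_def by auto
  have "(\<lambda>(u, v). cnj (T (K (0, v)) (- u, y))) = (\<lambda>z. cnj (T (K z) (0, y)))"
    using commutant_rho_kernel_translate[OF rkhs K_translate T, of _ _ 0 y]
    by (auto simp: fun_eq_iff)
  then show "(\<lambda>(u, v). cnj (T (K (0, v)) (- u, y))) \<in> H"
    using rkhs_L2_bounded_op_eq_l2ip(1)[OF rkhs T_bounded] by simp
qed

theorem proposition5p13:
  fixes nu :: "'g::{topological_ab_group_add,t2_space} measure"
    and lam :: "'y measure"
    and H :: "('g \<times> 'y \<Rightarrow> complex) set"
    and K :: "'g \<times> 'y \<Rightarrow> 'g \<times> 'y \<Rightarrow> complex"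
    and T :: "('g \<times> 'y \<Rightarrow> complex) \<Rightarrow> ('g \<times> 'y \<Rightarrow> complex)"
  assumes "locally_compact_space (euclidean :: 'g topology)"
    and "haar_measure nu"
    and "space lam = UNIV"
    and "rkhs_L2 (nu \<Otimes>\<^sub>M lam) H K"
    and "\<And>u x v y. K (x, y) (u, v) = K (0, y) (u - x, v)"
    and "T \<in> commutant_rho (nu \<Otimes>\<^sub>M lam) H"
  defines "psi \<equiv> (\<lambda>u v y. T (K (0, y)) (u, v))"
  shows "psi \<in> A_class (nu \<Otimes>\<^sub>M lam) H \<and> (\<forall>f \<in> H. T f = S_psi (nu \<Otimes>\<^sub>M lam) psi f)"
proof -
  let ?M = "nu \<Otimes>\<^sub>M lam"
  interpret l2_subspace ?M H
    using assms(4) by (rule rkhs_L2_imp_l2_subspace)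
  have T_eq: "\<And>f. f \<in> H \<Longrightarrow> T f = S_psi ?M psi f"
    unfolding psi_def by (rule commutant_rho_eq_S_psi[OF assms(4-6)])
  have "bounded_op ?M H T"
    using assms(6) unfolding commutant_rho_def by simp
  then have "bounded_op ?M H (S_psi ?M psi)"
    by (rule bounded_op_cong) (simp add: T_eq)
  moreover have "psi \<in> A0 H"
    unfolding psi_def by (rule commutant_rho_kernel_in_A0[OF assms(4-6)])
  ultimately show ?thesis
    using T_eq unfolding A_class_def by blast
qed

end
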